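(* In the setting below, assume that (I) $g$ is self-reciprocal, (II) $l$ is self-reciprocal, (III) $\gcd(t_{22},g_{12})=1$, and (IV) $\gcd\big(r_{22},\ g_{11}\bar g_{11}+g_{12}\bar g_{12}\big)=1$. Then for every irreducible factor $h_j$ of $x^m-1$ that is not self-reciprocal, the constituents satisfy $C_j'\cap (C_j'')^{\perp_e}=\{\mathbf 0\}$ and $C_j''\cap (C_j')^{\perp_e}=\{\mathbf 0\}$.
   Context: Let $q$ be a prime power, $F=\mathbb{F}_q$, $m\ge1$ with $\gcd(q,m)=1$. For a nonzero polynomial $f$ of degree $k$, $f^*(x)=x^kf(x^{-1})$; $f$ is self-reciprocal if $f^*=\alpha f$ for some $\alpha\in F$. For a polynomial $f$ of degree at most $m$, $\bar f(x)=x^m f(x^{-1})$. Let $g_{11},g_{12},g_{22}\in F[x]$ satisfy $g_{11}\mid x^m-1$, $g_{22}\mid x^m-1$, $\deg g_{12}<\deg g_{22}$, $g_{11}g_{22}\mid (x^m-1)g_{12}$ (these generate the quasi-cyclic code $C=\langle (g_{11},g_{12}),(0,g_{22})\rangle\subseteq (F[x]/\langle x^m-1\rangle)^2$). Define $g=\gcd(g_{11},g_{22})$, $l=(x^m-1)/\mathrm{lcm}(g_{11},g_{22})$, $g_{11}=g\,g_{11}'$, $g_{22}=g\,g_{22}'$, $r_{22}=\gcd(g_{22}',g_{22}'^* )$, $t_{22}=g_{22}'/r_{22}$. Let $\xi$ be a primitive $m$-th root of unity in an extension of $F$. Let $h_j$ be an irreducible factor of $x^m-1$ over $F$ that is not self-reciprocal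 (so $h_j^*$ is, up to a scalar, a different irreducible factor), and let $\xi^{v_j}$ be a root of $h_j$; let $K_j=F(\xi^{v_j})$. The constituent $C_j'\subseteq K_j^2$ is the $K_j$-span of the rows $(g_{11}(\xi^{v_j}),g_{12}(\xi^{v_j}))$, $(0,g_{22}(\xi^{v_j}))$, and the constituent $C_j''\subseteq K_j^2$ is the $K_j$-span of the rows $(\bar g_{11}(\xi^{v_j}),\bar g_{12}(\xi^{v_j}))$, $(0,\bar g_{22}(\xi^{v_j}))$. For $D\subseteq K_j^2$, $D^{\perp_e}$ is its dual with respect to the standard bilinear form $c_1d_1+c_2d_2$. *)

theory Defs
  imports "HOL-Computational_Algebra.Computational_Algebra"
begin

(* f^*(x) = x^(deg f) f(1/x) : this is exactly the library's reflect_poly *)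
definition recip :: "'a::field poly \<Rightarrow> 'a poly" where
  "recip f = reflect_poly f"

definition self_reciprocal :: "'a::field poly \<Rightarrow> bool" where
  "self_reciprocal f \<longleftrightarrow> f \<noteq> 0 \<and> (\<exists>c. recip f = smult c f)"

(* \bar f(x) = x^m f(1/x) for deg f <= m *)
definition bar :: "nat \<Rightarrow> 'a::field poly \<Rightarrow> 'a poly" where
  "bar m f = (\<Sum>i\<le>m. monom (coeff f i) (m - i))"

definition xm1 :: "nat \<Rightarrow> 'a::field poly" where
  "xm1 m = monom 1 m - 1"

definition field_embedding :: "('a::field \<Rightarrow> 'b::field) \<Rightarrow> bool" where
  "field_embedding \<phi> \<longleftrightarrow> inj \<phi> \<and> \<phi> 0 = 0 \<and> \<phi> 1 = 1 \<and>
     (\<forall>x y. \<phi> (x + y) = \<phi> x + \<phi> y) \<and> (\<forall>x y. \<phi> (x * y) = \<phi> x * \<phi> y)"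

definition gen_subfield :: "('a \<Rightarrow> 'b::field) \<Rightarrow> 'b \<Rightarrow> 'b set" where
  "gen_subfield \<phi> \<alpha> = \<Inter> {S. range \<phi> \<subseteq> S \<and> \<alpha> \<in> S \<and> 0 \<in> S \<and> 1 \<in> S \<and>
       (\<forall>x\<in>S. \<forall>y\<in>S. x + y \<in> S \<and> x * y \<in> S) \<and>
       (\<forall>x\<in>S. - x \<in> S \<and> inverse x \<in> S)}"

definition ev :: "('a::field \<Rightarrow> 'b::field) \<Rightarrow> 'a poly \<Rightarrow> 'b \<Rightarrow> 'b" where
  "ev \<phi> p z = poly (map_poly \<phi> p) z"

definition span2 :: "'b::field set \<Rightarrow> 'b \<times> 'b \<Rightarrow> 'b \<times> 'b \<Rightarrow> ('b \<times> 'b) set" where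
  "span2 K u w = {(s * fst u + t * fst w, s * snd u + t * snd w) | s t. s \<in> K \<and> t \<in> K}"

definition edual :: "'b::field set \<Rightarrow> ('b \<times> 'b) set \<Rightarrow> ('b \<times> 'b) set" where
  "edual K D = {d. fst d \<in> K \<and> snd d \<in> K \<and> (\<forall>c\<in>D. fst c * fst d + snd c * snd d = 0)}"

definition constituent' :: "('a::field \<Rightarrow> 'b::field) \<Rightarrow> 'b set \<Rightarrow> 'b \<Rightarrow> 'a poly \<Rightarrow> 'a poly \<Rightarrow> 'a poly \<Rightarrow> ('b \<times> 'b) set" where
  "constituent' \<phi> K \<alpha> g11 g12 g22 =
     span2 K (ev \<phi> g11 \<alpha>, ev \<phi> g12 \<alpha>) (0, ev \<phi> g22 \<alpha>)"

definition constituent'' :: "nat \<Rightarrow> ('a::field \<Rightarrow> 'b::field) \<Rightarrow> 'b set \<Rightarrow> 'b \<Rightarrow> 'a poly \<Rightarrow> 'a poly \<Rightarrow> 'a poly \<Rightarrow> ('b \<times> 'b) set" where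
  "constituent'' m \<phi> K \<alpha> g11 g12 g22 =
     span2 K (ev \<phi> (bar m g11) \<alpha>, ev \<phi> (bar m g12) \<alpha>) (0, ev \<phi> (bar m g22) \<alpha>)"

end

theory Submission
  imports Defs
begin

text \<open>
  Put \<open>\<alpha> = \<xi>\<^sup>v\<close>. Since \<open>\<alpha>\<^sup>m = 1\<close>, evaluating \<open>bar m f\<close> at \<open>\<alpha>\<close> is evaluating \<open>f\<close> at \<open>\<alpha>\<inverse>\<close>, so
  \<open>C''\<close> is the span of the generator values at \<open>\<alpha>\<inverse>\<close>, and both claims are instances of one
  statement about an arbitrary \<open>m\<close>-th root of unity \<open>z\<close> and its inverse.
  As \<open>x\<^sup>m - 1\<close> is separable, \<open>z\<close> is a root of exactly one of \<open>lcm g\<^sub>1\<^sub>1 g\<^sub>2\<^sub>2\<close> and \<open>l\<close>, and \<open>g\<^sub>1\<^sub>2\<close>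
  vanishes wherever \<open>g\<close> does. Conditions (I) and (II) make "root of \<open>g\<close>" and "root of the lcm"
  invariant under \<open>z \<mapsto> z\<inverse>\<close>; (III) forces \<open>g\<^sub>1\<^sub>2(w) \<noteq> 0\<close> when \<open>w\<close> is a root of \<open>g\<^sub>2\<^sub>2'\<close> but \<open>w\<inverse>\<close>
  is not, and (IV) forces \<open>g\<^sub>1\<^sub>1(z) g\<^sub>1\<^sub>1(z\<inverse>) + g\<^sub>1\<^sub>2(z) g\<^sub>1\<^sub>2(z\<inverse>) \<noteq> 0\<close> when both are.
  Checking the possible zero patterns of the generator values then shows the intersection is trivial.
  The argument works for every root of \<open>x\<^sup>m - 1\<close>.
\<close>

context
  fixes \<phi> :: "'a::field \<Rightarrow> 'b::field"
  assumes emb: "field_embedding \<phi>"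
begin

lemma field_embedding_hom [simp]:
  "\<phi> 0 = 0" "\<phi> 1 = 1" "\<phi> (x + y) = \<phi> x + \<phi> y" "\<phi> (x * y) = \<phi> x * \<phi> y"
  using emb by (simp_all add: field_embedding_def)

lemma field_embedding_eq_0_iff [simp]: "\<phi> x = 0 \<longleftrightarrow> x = 0"
  using emb by (metis field_embedding_def injD)

lemma ev_0 [simp]: "ev \<phi> 0 z = 0" and ev_1 [simp]: "ev \<phi> 1 z = 1"
  by (simp_all add: ev_def)

lemma degree_map_poly_embedding: "degree (map_poly \<phi> p) = degree p"
  by (rule degree_map_poly) simp

lemma ev_add: "ev \<phi> (p + q) z = ev \<phi> p z + ev \<phi> q z"
proof -
  have "map_poly \<phi> (p + q) = map_poly \<phi> p + map_poly \<phi> q"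
    by (intro poly_eqI) (simp add: coeff_map_poly)
  then show ?thesis by (simp add: ev_def)
qed

lemma ev_diff: "ev \<phi> (p - q) z = ev \<phi> p z - ev \<phi> q z"
  using ev_add[of "p - q" q z] by simp

lemma ev_smult: "ev \<phi> (smult c p) z = \<phi> c * ev \<phi> p z"
  by (simp add: ev_def map_poly_smult)

lemma ev_pCons: "ev \<phi> (pCons a p) z = \<phi> a + z * ev \<phi> p z"
  by (simp add: ev_def map_poly_pCons)

lemma ev_mult: "ev \<phi> (p * q) z = ev \<phi> p z * ev \<phi> q z"
proof (induction p rule: pCons_induct)
  case 0
  then show ?case by simp
next
  case (pCons a p)
  then show ?case by (simp add: mult_pCons_left ev_add ev_smult ev_pCons algebra_simps)
qed

lemma ev_monom: "ev \<phi> (monom c n) z = \<phi> c * z ^ n"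
  by (simp add: ev_def map_poly_monom poly_monom)

lemma ev_sum: "ev \<phi> (\<Sum>i\<in>A. f i) z = (\<Sum>i\<in>A. ev \<phi> (f i) z)"
  by (induction A rule: infinite_finite_induct) (simp_all add: ev_add)

lemma ev_eq_0_if_dvd: "p dvd q \<Longrightarrow> ev \<phi> p z = 0 \<Longrightarrow> ev \<phi> q z = 0"
  by (auto simp: dvd_def ev_mult)

lemma ev_xm1: "ev \<phi> (xm1 m) z = z ^ m - 1"
  by (simp add: xm1_def ev_diff ev_monom)

lemma ev_recip: "z \<noteq> 0 \<Longrightarrow> ev \<phi> (recip p) z = z ^ degree p * ev \<phi> p (inverse z)"
proof -
  have "map_poly \<phi> (reflect_poly p) = reflect_poly (map_poly \<phi> p)"
    by (intro poly_eqI) (simp add: coeff_map_poly coeff_reflect_poly degree_map_poly_embedding)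
  moreover assume "z \<noteq> 0"
  ultimately show ?thesis
    by (simp add: ev_def recip_def poly_reflect_poly_nz degree_map_poly_embedding)
qed

lemma ev_recip_eq_0_iff: "z \<noteq> 0 \<Longrightarrow> ev \<phi> (recip p) z = 0 \<longleftrightarrow> ev \<phi> p (inverse z) = 0"
  by (simp add: ev_recip)

lemma self_reciprocal_root_iff:
  assumes "self_reciprocal S" and "z \<noteq> 0"
  shows "ev \<phi> S (inverse z) = 0 \<longleftrightarrow> ev \<phi> S z = 0"
proof -
  obtain c where c: "recip S = smult c S" and "S \<noteq> 0"
    using assms(1) by (auto simp: self_reciprocal_def)
  then have "c \<noteq> 0" by (auto simp: recip_def)
  have "\<phi> c * ev \<phi> S z = z ^ degree S * ev \<phi> S (inverse z)"
    using ev_recip[OF \<open>z \<noteq> 0\<close>, of S] c by (simp add: ev_smult)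
  then show ?thesis using \<open>c \<noteq> 0\<close> \<open>z \<noteq> 0\<close> by auto
qed

lemma ev_bar:
  assumes "degree p \<le> m" and "z ^ m = 1"
  shows "ev \<phi> (bar m p) z = ev \<phi> p (inverse z)"
proof -
  have "ev \<phi> (bar m p) z = (\<Sum>i\<le>m. \<phi> (coeff p i) * z ^ (m - i))"
    by (simp add: bar_def ev_sum ev_monom)
  also have "\<dots> = (\<Sum>i\<le>m. \<phi> (coeff p i) * inverse z ^ i)"
  proof (intro sum.cong refl)
    fix i assume "i \<in> {..m}"
    then have "z ^ i * z ^ (m - i) = 1" using assms(2) by (simp flip: power_add)
    then show "\<phi> (coeff p i) * z ^ (m - i) = \<phi> (coeff p i) * inverse z ^ i"
      by (simp add: power_inverse inverse_unique[symmetric])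
  qed
  also have "\<dots> = (\<Sum>i\<le>degree p. \<phi> (coeff p i) * inverse z ^ i)"
    using assms(1) by (intro sum.mono_neutral_right) (auto simp: coeff_eq_0)
  also have "\<dots> = ev \<phi> p (inverse z)"
    by (simp add: ev_def poly_altdef degree_map_poly_embedding coeff_map_poly)
  finally show ?thesis .
qed

text \<open>A common root of \<open>f\<close> and \<open>u\<close> would be a double root of \<open>x\<^sup>m - 1\<close>, hence a nonzero root
  of its derivative \<open>m x\<^sup>m\<^sup>-\<^sup>1\<close>, which is impossible as \<open>m \<noteq> 0\<close> in the field.\<close>

lemma xm1_factors_no_common_root:
  assumes fu: "f * u = xm1 m" and char: "(of_nat m :: 'a) \<noteq> 0"
  shows "ev \<phi> f z \<noteq> 0 \<or> ev \<phi> u z \<noteq> 0"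
proof (rule ccontr)
  assume "\<not> ?thesis"
  then have f: "ev \<phi> f z = 0" and u: "ev \<phi> u z = 0" by auto
  have "z ^ m - 1 = ev \<phi> (f * u) z" by (simp only: fu ev_xm1)
  then have "z ^ m = 1" using f by (simp add: ev_mult)
  moreover have "m \<noteq> 0" using char by (metis of_nat_0)
  ultimately have "z \<noteq> 0" by (auto simp: power_0_left)
  have "pderiv (f * u) = monom (of_nat m) (m - 1)"
    by (simp add: fu xm1_def pderiv_diff pderiv_monom)
  then have "\<phi> (of_nat m) * z ^ (m - 1) = ev \<phi> (pderiv (f * u)) z"
    by (simp only: ev_monom)
  also have "\<dots> = 0"
    using f u by (simp add: pderiv_mult ev_add ev_mult)
  finally show False
    using char \<open>z \<noteq> 0\<close> by simp
qed

lemma ev_xm1_factor_eq_0_iff: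
  assumes "f * u = xm1 m" and "(of_nat m :: 'a) \<noteq> 0" and "z ^ m = 1"
  shows "ev \<phi> f z = 0 \<longleftrightarrow> ev \<phi> u z \<noteq> 0"
  using xm1_factors_no_common_root[OF assms(1,2), of z] assms(3) ev_xm1[of m z]
  by (auto simp flip: assms(1) simp: ev_mult)

end

lemma ev_gcd_eq_0_iff:
  fixes p q :: "'a::field_gcd poly"
  assumes emb: "field_embedding \<phi>"
  shows "ev \<phi> (gcd p q) z = 0 \<longleftrightarrow> ev \<phi> p z = 0 \<and> ev \<phi> q z = 0"
proof
  assume "ev \<phi> (gcd p q) z = 0"
  then show "ev \<phi> p z = 0 \<and> ev \<phi> q z = 0"
    by (meson emb ev_eq_0_if_dvd gcd_dvd1 gcd_dvd2)
next
  assume "ev \<phi> p z = 0 \<and> ev \<phi> q z = 0"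
  moreover have "gcd p q = fst (bezout_coefficients p q) * p + snd (bezout_coefficients p q) * q"
    by (simp add: bezout_coefficients_fst_snd)
  ultimately show "ev \<phi> (gcd p q) z = 0"
    by (metis emb ev_add ev_mult mult_zero_right add_0)
qed

lemma ev_lcm_eq_0_iff:
  fixes p q :: "'a::field_gcd poly"
  assumes emb: "field_embedding \<phi>"
  shows "ev \<phi> (lcm p q) z = 0 \<longleftrightarrow> ev \<phi> p z = 0 \<or> ev \<phi> q z = 0"
proof
  assume "ev \<phi> (lcm p q) z = 0"
  moreover have "lcm p q dvd p * q" by (rule lcm_least) simp_all
  ultimately have "ev \<phi> (p * q) z = 0" using ev_eq_0_if_dvd[OF emb] by blast
  then show "ev \<phi> p z = 0 \<or> ev \<phi> q z = 0" by (simp add: ev_mult[OF emb])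
next
  assume "ev \<phi> p z = 0 \<or> ev \<phi> q z = 0"
  then show "ev \<phi> (lcm p q) z = 0" by (meson emb ev_eq_0_if_dvd dvd_lcm1 dvd_lcm2)
qed

lemma gcd_eq_1_no_common_root:
  fixes p q :: "'a::field_gcd poly"
  assumes "field_embedding \<phi>" and "gcd p q = 1"
  shows "ev \<phi> p z \<noteq> 0 \<or> ev \<phi> q z \<noteq> 0"
  using ev_gcd_eq_0_iff[OF assms(1), of p q z] assms by (simp add: ev_1)

lemma of_nat_card_eq_0: "(of_nat (card (UNIV :: 'a::{finite,field} set)) :: 'a) = 0"
proof -
  have "(\<Sum>x\<in>UNIV. x + 1) = (\<Sum>x\<in>(UNIV::'a set). x)"
    by (rule sum.reindex_bij_witness[of _ "\<lambda>x. x - 1" "\<lambda>x. x + 1"]) auto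
  then show ?thesis by (simp add: sum.distrib)
qed

lemma of_nat_neq_0_if_coprime_card:
  assumes "coprime (card (UNIV :: 'a::{finite,field} set)) m"
  shows "(of_nat m :: 'a) \<noteq> 0"
proof
  assume m0: "(of_nat m :: 'a) = 0"
  have "gcd (int (card (UNIV :: 'a set))) (int m) = 1"
    using assms by (simp flip: coprime_iff_gcd_eq_1)
  then obtain s t where "s * int (card (UNIV :: 'a set)) + t * int m = 1"
    using bezout_int by metis
  then have "(of_int (s * int (card (UNIV :: 'a set)) + t * int m) :: 'a) = 1" by simp
  then show False using m0 of_nat_card_eq_0[where 'a='a] by simp
qed

lemma xm1_neq_0: "(of_nat m :: 'a::field) \<noteq> 0 \<Longrightarrow> xm1 m \<noteq> (0 :: 'a poly)"
  by (cases m) (auto simp: xm1_def poly_eq_iff)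

lemma degree_le_if_dvd_xm1:
  assumes "p dvd xm1 m" and "(of_nat m :: 'a) \<noteq> 0"
  shows "degree (p :: 'a::field poly) \<le> m"
proof -
  have "xm1 m \<noteq> (0 :: 'a poly)" using assms(2) by (rule xm1_neq_0)
  moreover have "degree (xm1 m :: 'a poly) \<le> m"
    unfolding xm1_def by (rule order.trans[OF degree_diff_le]) (auto simp: degree_monom_le)
  ultimately show ?thesis by (metis assms(1) dvd_imp_degree_le order.trans)
qed

lemma span2_inter_edual_eq_zero:
  fixes a b c a' b' c' :: "'b::field"
  assumes K: "0 \<in> K" "1 \<in> K"
    and cond: "(a = 0 \<and> b = 0 \<and> c = 0) \<or> (a' \<noteq> 0 \<and> c' \<noteq> 0) \<or> (a = 0 \<and> (b' \<noteq> 0 \<or> c' \<noteq> 0))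
               \<or> (c = 0 \<and> ((b \<noteq> 0 \<and> c' \<noteq> 0) \<or> a * a' + b * b' \<noteq> 0))"
  shows "span2 K (a, b) (0, c) \<inter> edual K (span2 K (a', b') (0, c')) = {(0, 0)}"
proof -
  have gens: "(a', b') \<in> span2 K (a', b') (0, c')" "(0, c') \<in> span2 K (a', b') (0, c')"
    unfolding span2_def using K by force+
  have "x = (0, 0)" if x1: "x \<in> span2 K (a, b) (0, c)" and x2: "x \<in> edual K (span2 K (a', b') (0, c'))" for x
  proof -
    obtain s t where x: "x = (s * a, s * b + t * c)" using x1 by (auto simp: span2_def)
    have o1: "a' * (s * a) + b' * (s * b + t * c) = 0" and o2: "c' * (s * b + t * c) = 0"
      using x2 gens by (auto simp: edual_def x)
    from cond show ?thesis
    proof (elim disjE conjE)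
      assume "c = 0" "a * a' + b * b' \<noteq> 0"
      moreover have "s * (a * a' + b * b') = 0" using o1 \<open>c = 0\<close> by (simp add: algebra_simps)
      ultimately show ?thesis using x by simp
    qed (use x o1 o2 in auto)
  qed
  moreover have "(0, 0) \<in> span2 K (a, b) (0, c)" unfolding span2_def using K by force
  moreover have "(0, 0) \<in> edual K (span2 K (a', b') (0, c'))" using K by (simp add: edual_def)
  ultimately show ?thesis by blast
qed

locale qc_generators =
  fixes \<phi> :: "'a::field_gcd \<Rightarrow> 'b::field" and m :: nat and g11 g12 g22 :: "'a poly"
  assumes emb: "field_embedding \<phi>"
    and char: "(of_nat m :: 'a) \<noteq> 0"
    and d11: "g11 dvd xm1 m" and d22: "g22 dvd xm1 m"
    and deg12: "g12 = 0 \<or> degree g12 < degree g22"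
    and dprod: "g11 * g22 dvd xm1 m * g12"
    and I: "self_reciprocal (gcd g11 g22)"
    and II: "self_reciprocal (xm1 m div lcm g11 g22)"
    and III: "gcd (g22 div gcd g11 g22 div gcd (g22 div gcd g11 g22) (recip (g22 div gcd g11 g22))) g12 = 1"
    and IV: "gcd (gcd (g22 div gcd g11 g22) (recip (g22 div gcd g11 g22)))
               (g11 * bar m g11 + g12 * bar m g12) = 1"
begin

abbreviation "g \<equiv> gcd g11 g22"
abbreviation "l \<equiv> xm1 m div lcm g11 g22"
abbreviation "g22' \<equiv> g22 div g"
abbreviation "r22 \<equiv> gcd g22' (recip g22')"
abbreviation "t22 \<equiv> g22' div r22"

lemma degree_generators_le: "degree g11 \<le> m" "degree g12 \<le> m" "degree g22 \<le> m"
  using degree_le_if_dvd_xm1[OF d11 char] degree_le_if_dvd_xm1[OF d22 char] deg12 by auto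

lemma root_of_unity_neq_0: "(z :: 'b) ^ m = 1 \<Longrightarrow> z \<noteq> 0"
  using char by (auto simp: power_0_left split: if_splits)

lemma g_root_iff: "ev \<phi> g z = 0 \<longleftrightarrow> ev \<phi> g11 z = 0 \<and> ev \<phi> g22 z = 0"
  by (rule ev_gcd_eq_0_iff[OF emb])

text \<open>At a common root of \<open>g\<^sub>1\<^sub>1\<close> and \<open>g\<^sub>2\<^sub>2\<close> the cofactor \<open>(x\<^sup>m - 1)/g\<^sub>1\<^sub>1\<close> does not vanish,
  and it times \<open>g\<^sub>1\<^sub>2\<close> is a multiple of \<open>g\<^sub>2\<^sub>2\<close>.\<close>

lemma g12_root_if_g_root:
  assumes "ev \<phi> g11 z = 0" and "ev \<phi> g22 z = 0"
  shows "ev \<phi> g12 z = 0"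
proof -
  obtain u where u: "g11 * u = xm1 m" using d11 by (metis dvd_def)
  have "g11 \<noteq> 0" using u xm1_neq_0[OF char] by auto
  then have "g22 dvd u * g12"
    using dprod by (simp flip: u add: mult.assoc mult.left_commute[of g11])
  then have "ev \<phi> (u * g12) z = 0" using ev_eq_0_if_dvd[OF emb] assms(2) by blast
  moreover have "ev \<phi> u z \<noteq> 0" using xm1_factors_no_common_root[OF emb u char] assms(1) by blast
  ultimately show ?thesis by (simp add: ev_mult[OF emb])
qed

lemma lcm_root_iff_not_l_root:
  assumes "z ^ m = 1"
  shows "ev \<phi> (lcm g11 g22) z = 0 \<longleftrightarrow> ev \<phi> l z \<noteq> 0"
  by (rule ev_xm1_factor_eq_0_iff[OF emb _ char assms])
    (simp add: dvd_mult_div_cancel lcm_least d11 d22)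

lemma lcm_root_inverse_iff:
  assumes "z ^ m = 1"
  shows "ev \<phi> (lcm g11 g22) (inverse z) = 0 \<longleftrightarrow> ev \<phi> (lcm g11 g22) z = 0"
proof -
  have "inverse z ^ m = 1" using assms by (simp add: power_inverse)
  then show ?thesis
    using lcm_root_iff_not_l_root assms self_reciprocal_root_iff[OF emb II root_of_unity_neq_0[OF assms]]
    by blast
qed

lemma generator_root_inverse_iff:
  assumes "z ^ m = 1"
  shows "(ev \<phi> g11 (inverse z) = 0 \<or> ev \<phi> g22 (inverse z) = 0) \<longleftrightarrow> (ev \<phi> g11 z = 0 \<or> ev \<phi> g22 z = 0)"
    and "(ev \<phi> g11 (inverse z) = 0 \<and> ev \<phi> g22 (inverse z) = 0) \<longleftrightarrow> (ev \<phi> g11 z = 0 \<and> ev \<phi> g22 z = 0)"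
  using lcm_root_inverse_iff[OF assms] ev_lcm_eq_0_iff[OF emb]
    self_reciprocal_root_iff[OF emb I root_of_unity_neq_0[OF assms]] g_root_iff
  by simp_all

lemma g22'_root_iff:
  assumes "ev \<phi> g11 z \<noteq> 0"
  shows "ev \<phi> g22' z = 0 \<longleftrightarrow> ev \<phi> g22 z = 0"
proof -
  have "g22 = g * g22'" by simp
  then show ?thesis using assms g_root_iff by (metis ev_mult[OF emb] mult_eq_0_iff)
qed

lemma r22_root_iff:
  assumes "z ^ m = 1"
  shows "ev \<phi> r22 z = 0 \<longleftrightarrow> ev \<phi> g22' z = 0 \<and> ev \<phi> g22' (inverse z) = 0"
  using ev_gcd_eq_0_iff[OF emb] ev_recip_eq_0_iff[OF emb root_of_unity_neq_0[OF assms]] by simp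

lemma g12_nonroot_if_g22_root_not_inverse:
  assumes w: "w ^ m = 1" and "ev \<phi> g22 w = 0" and "ev \<phi> g11 w \<noteq> 0" and "ev \<phi> g22 (inverse w) \<noteq> 0"
  shows "ev \<phi> g12 w \<noteq> 0"
proof -
  have "ev \<phi> g22' w = 0" using assms g22'_root_iff by blast
  moreover have "ev \<phi> g22' (inverse w) \<noteq> 0"
    using assms(4) ev_eq_0_if_dvd[OF emb, of g22' g22] by (metis dvd_div_mult_self gcd_dvd2 dvd_triv_left)
  ultimately have "ev \<phi> t22 w = 0"
    using r22_root_iff[OF w] ev_mult[OF emb, of r22 t22 w] by (simp add: dvd_mult_div_cancel)
  then show ?thesis using gcd_eq_1_no_common_root[OF emb III] by blast
qed

lemma pairing_nonzero_if_g22_root_and_inverse: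
  assumes z: "z ^ m = 1" and "ev \<phi> g22 z = 0" and "ev \<phi> g22 (inverse z) = 0" and "ev \<phi> g11 z \<noteq> 0"
  shows "ev \<phi> g11 z * ev \<phi> g11 (inverse z) + ev \<phi> g12 z * ev \<phi> g12 (inverse z) \<noteq> 0"
proof -
  have "ev \<phi> g11 (inverse z) \<noteq> 0" using generator_root_inverse_iff(2)[OF z] assms by blast
  then have "ev \<phi> r22 z = 0" using assms g22'_root_iff r22_root_iff[OF z] by blast
  then have "ev \<phi> (g11 * bar m g11 + g12 * bar m g12) z \<noteq> 0"
    using gcd_eq_1_no_common_root[OF emb IV] by blast
  then show ?thesis
    by (simp add: ev_add[OF emb] ev_mult[OF emb] ev_bar[OF emb degree_generators_le(1) z]
        ev_bar[OF emb degree_generators_le(2) z])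
qed

lemma span_inter_edual_inverse_eq_zero:
  assumes z: "z ^ m = 1" and K: "0 \<in> K" "1 \<in> K"
  shows "span2 K (ev \<phi> g11 z, ev \<phi> g12 z) (0, ev \<phi> g22 z)
           \<inter> edual K (span2 K (ev \<phi> g11 (inverse z), ev \<phi> g12 (inverse z)) (0, ev \<phi> g22 (inverse z)))
         = {(0, 0)}"
proof (rule span2_inter_edual_eq_zero[OF K])
  have zi: "inverse z ^ m = 1" and izz: "inverse (inverse z) = z" using z by (simp_all add: power_inverse)
  note inverse_pattern = generator_root_inverse_iff[OF z]
  consider "ev \<phi> g11 z = 0" "ev \<phi> g22 z = 0" | "ev \<phi> g11 z \<noteq> 0" "ev \<phi> g22 z \<noteq> 0"
    | "ev \<phi> g11 z = 0" "ev \<phi> g22 z \<noteq> 0" | "ev \<phi> g11 z \<noteq> 0" "ev \<phi> g22 z = 0"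
    by blast
  then show "(ev \<phi> g11 z = 0 \<and> ev \<phi> g12 z = 0 \<and> ev \<phi> g22 z = 0)
    \<or> (ev \<phi> g11 (inverse z) \<noteq> 0 \<and> ev \<phi> g22 (inverse z) \<noteq> 0)
    \<or> (ev \<phi> g11 z = 0 \<and> (ev \<phi> g12 (inverse z) \<noteq> 0 \<or> ev \<phi> g22 (inverse z) \<noteq> 0))
    \<or> (ev \<phi> g22 z = 0 \<and> ((ev \<phi> g12 z \<noteq> 0 \<and> ev \<phi> g22 (inverse z) \<noteq> 0)
        \<or> ev \<phi> g11 z * ev \<phi> g11 (inverse z) + ev \<phi> g12 z * ev \<phi> g12 (inverse z) \<noteq> 0))"
  proof cases
    case 1
    then show ?thesis using g12_root_if_g_root by blast
  next
    case 2
    then show ?thesis using inverse_pattern by blast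
  next
    case 3
    show ?thesis
    proof (cases "ev \<phi> g22 (inverse z) = 0")
      case True
      then have "ev \<phi> g11 (inverse z) \<noteq> 0" using 3 inverse_pattern(2) by blast
      then have "ev \<phi> g12 (inverse z) \<noteq> 0"
        using g12_nonroot_if_g22_root_not_inverse[OF zi True] 3 izz by simp
      then show ?thesis using 3 by blast
    next
      case False
      then show ?thesis using 3 by blast
    qed
  next
    case 4
    show ?thesis
    proof (cases "ev \<phi> g22 (inverse z) = 0")
      case True
      then show ?thesis using 4 pairing_nonzero_if_g22_root_and_inverse[OF z] by blast
    next
      case False
      then show ?thesis using 4 g12_nonroot_if_g22_root_not_inverse[OF z] by blast
    qed
  qed
qed

end

theorem lemma3p7:
  fixes m :: nat and g11 g12 g22 h :: "'a::{finite,field_gcd} poly"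
    and \<phi> :: "'a \<Rightarrow> 'b::field" and \<xi> :: 'b and v :: nat
  assumes m: "m \<ge> 1" and cop: "coprime (card (UNIV :: 'a set)) m"
    and d11: "g11 dvd xm1 m" and d22: "g22 dvd xm1 m"
    and deg12: "g12 = 0 \<or> degree g12 < degree g22"
    and dprod: "g11 * g22 dvd xm1 m * g12"
    and emb: "field_embedding \<phi>"
    and xi: "\<xi> ^ m = 1" "\<forall>k. 0 < k \<and> k < m \<longrightarrow> \<xi> ^ k \<noteq> 1"
    and I: "self_reciprocal (gcd g11 g22)"
    and II: "self_reciprocal (xm1 m div lcm g11 g22)"
    and III: "gcd (g22 div gcd g11 g22 div gcd (g22 div gcd g11 g22) (recip (g22 div gcd g11 g22))) g12 = 1"
    and IV: "gcd (gcd (g22 div gcd g11 g22) (recip (g22 div gcd g11 g22)))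
                  (g11 * bar m g11 + g12 * bar m g12) = 1"
    and hirr: "irreducible h" and hdvd: "h dvd xm1 m" and hnsr: "\<not> self_reciprocal h"
    and root: "ev \<phi> h (\<xi> ^ v) = 0"
  shows "constituent' \<phi> (gen_subfield \<phi> (\<xi> ^ v)) (\<xi> ^ v) g11 g12 g22 \<inter>
           edual (gen_subfield \<phi> (\<xi> ^ v)) (constituent'' m \<phi> (gen_subfield \<phi> (\<xi> ^ v)) (\<xi> ^ v) g11 g12 g22)
           = {(0, 0)}
       \<and> constituent'' m \<phi> (gen_subfield \<phi> (\<xi> ^ v)) (\<xi> ^ v) g11 g12 g22 \<inter>
           edual (gen_subfield \<phi> (\<xi> ^ v)) (constituent' \<phi> (gen_subfield \<phi> (\<xi> ^ v)) (\<xi> ^ v) g11 g12 g22)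
           = {(0, 0)}"
proof -
  interpret qc_generators \<phi> m g11 g12 g22
    by (intro qc_generators.intro of_nat_neq_0_if_coprime_card[OF cop] assms)
  define \<alpha> where "\<alpha> = \<xi> ^ v"
  define K where "K = gen_subfield \<phi> \<alpha>"
  have K: "0 \<in> K" "1 \<in> K" unfolding K_def gen_subfield_def by blast+
  have \<alpha>: "\<alpha> ^ m = 1"
    unfolding \<alpha>_def using xi(1) by (metis power_mult mult.commute power_one)
  then have \<alpha>_inv: "inverse \<alpha> ^ m = 1" by (simp add: power_inverse)
  have bar_\<alpha>: "ev \<phi> (bar m f) \<alpha> = ev \<phi> f (inverse \<alpha>)" if "degree f \<le> m" for f
    using ev_bar[OF emb that \<alpha>] .
  show ?thesis
    using span_inter_edual_inverse_eq_zero[OF \<alpha> K] span_inter_edual_inverse_eq_zero[OF \<alpha>_inv K]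
    by (simp add: constituent'_def constituent''_def bar_\<alpha> degree_generators_le
        flip: \<alpha>_def K_def)
qed

end
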